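(* Let $\boldsymbol W'$ be the set of control pairs $(\boldsymbol u,\boldsymbol v)$ such that $$\int_0^T\sum_{m=1}^M\Big\{g_m\,b_m(u_m(t))+\alpha\, v_m(t)\,\beta(t)\,c_m(v_m(t))\,\bar i_m(t)\,\bar s(t)\Big\}\,dt=B,$$ where $g_m=\sum_{k\in\mathbb K_m}p_k$, $\bar i_m(t)=\sum_{k\in\mathbb K_m}k\,i_k(t)\,p_k$, $\bar s(t)=\sum_{k\in\mathbb K}(kp_k/\bar k)(1-i_k(t))$, and $(i_k)_{k\in\mathbb K}$ is the solution of the initial value problem $$\dot i_k(t)=\beta(t)(1-i_k(t))\,k\sum_{p=1}^M\sum_{l\in\mathbb K_p}q_l\,i_l(t)\,\alpha(1+v_p(t))+u_m(t)(1-i_k(t)),\ k\in\mathbb K_m,\qquad i_k(0)=i_0,$$ driven by $(\boldsymbol u,\boldsymbol v)$. Then the set $\boldsymbol W=\boldsymbol W'\cap(\boldsymbol U\times\boldsymbol V)$ is compact (with respect to the uniform topology on each component).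
   Context: Let $\mathbb K=\{K_{min},\dots,K_{max}\}$ be a finite set of positive integers, partitioned into $M\ge1$ groups of consecutive integers $\mathbb K_m=\{\tilde k_{m-1}+1,\dots,\tilde k_m\}$ with $K_{min}-1=\tilde k_0<\dots<\tilde k_M=K_{max}$. Let $(p_k)_{k\in\mathbb K}$ be a probability distribution on $\mathbb K$ with mean $\bar k=\sum_k kp_k$, and $q_k=(k+1)p_{k+1}/\bar k$ ($p_{K_{max}+1}=0$). Fix $T>0$, $i_0\in[0,1]$, $B>0$, $\alpha\in(0,1]$, $u_{max}>0$, $v_{max}\ge0$ with $\alpha(1+v_{max})\le1$, and a nonnegative spreading-rate function $\beta:[0,T]\to[0,\beta_{max}]$. For each $m$, $b_m,c_m:[0,\infty)\to[0,\infty)$ are continuous, nonnegative, increasing cost functions. Fix $C_\Psi:(0,\infty)\to[0,\infty)$ with $C_\Psi(\epsilon)\to0$ as $\epsilon\to0$, and let $\Psi$ be the set of real functions $\sigma$ on $[0,T]$ with $|\sigma(t)-\sigma(\hat t)|\le C_\Psi(\epsilon)$ whenever $|t-\hat t|\le\epsilon$. Let $U_m=\{\sigma\in\Psi:0\le\sigma\le u_{max}\}$, $V_m=\{\sigma\in\Psi:0\le\sigma\le v_{max}\}$, $\boldsymbol U=\prod_{m=1}^MU_m$, $\boldsymbol V=\prod_{m=1}^MV_m$, with $\boldsymbol u=(u_1,\dots,u_M)$, $\boldsymbol v=(v_1,\dots,v_M)$. *)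

theory Defs
  imports "HOL-Analysis.Analysis"
begin

definition grp :: "(nat \<Rightarrow> nat) \<Rightarrow> nat \<Rightarrow> nat set" where
  "grp kt m = {kt (m - 1) + 1 .. kt m}"

definition kbar :: "(nat \<Rightarrow> real) \<Rightarrow> nat \<Rightarrow> nat \<Rightarrow> real" where
  "kbar p Kmin Kmax = (\<Sum>k\<in>{Kmin..Kmax}. real k * p k)"

definition qq :: "(nat \<Rightarrow> real) \<Rightarrow> nat \<Rightarrow> nat \<Rightarrow> nat \<Rightarrow> real" where
  "qq p Kmin Kmax l = (if l + 1 \<le> Kmax then real (l + 1) * p (l + 1) / kbar p Kmin Kmax else 0)"

definition Psi :: "real \<Rightarrow> (real \<Rightarrow> real) \<Rightarrow> (real \<Rightarrow> real) set" where
  "Psi T CP = {\<sigma>. \<forall>t\<in>{0..T}. \<forall>s\<in>{0..T}. \<forall>\<epsilon>>0. \<bar>t - s\<bar> \<le> \<epsilon> \<longrightarrow> \<bar>\<sigma> t - \<sigma> s\<bar> \<le> CP \<epsilon>}"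

definition Ctrl :: "real \<Rightarrow> (real \<Rightarrow> real) \<Rightarrow> nat \<Rightarrow> real \<Rightarrow> (nat \<Rightarrow> real \<Rightarrow> real) set" where
  "Ctrl T CP M bnd = {u. \<forall>m\<in>{1..M}. u m \<in> Psi T CP \<and> (\<forall>t\<in>{0..T}. 0 \<le> u m t \<and> u m t \<le> bnd)}"

text \<open>i solves the initial value problem (integral / Caratheodory form) on [0,T].\<close>
definition is_solution ::
  "(nat \<Rightarrow> nat) \<Rightarrow> nat \<Rightarrow> nat \<Rightarrow> nat \<Rightarrow> (nat \<Rightarrow> real) \<Rightarrow> (real \<Rightarrow> real) \<Rightarrow> real \<Rightarrow> real \<Rightarrow> real
   \<Rightarrow> (nat \<Rightarrow> real \<Rightarrow> real) \<Rightarrow> (nat \<Rightarrow> real \<Rightarrow> real) \<Rightarrow> (nat \<Rightarrow> real \<Rightarrow> real) \<Rightarrow> bool" where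
  "is_solution kt M Kmin Kmax p \<beta> \<alpha> i0 T u v i \<longleftrightarrow>
     (\<forall>m\<in>{1..M}. \<forall>k\<in>grp kt m. \<forall>t\<in>{0..T}.
        ((\<lambda>s. \<beta> s * (1 - i k s) * real k *
               (\<Sum>pp\<in>{1..M}. \<Sum>l\<in>grp kt pp. qq p Kmin Kmax l * i l s * (\<alpha> * (1 + v pp s)))
             + u m s * (1 - i k s))
          has_integral (i k t - i0)) {0..t})"

definition cost_integrand ::
  "(nat \<Rightarrow> nat) \<Rightarrow> nat \<Rightarrow> nat \<Rightarrow> nat \<Rightarrow> (nat \<Rightarrow> real) \<Rightarrow> (real \<Rightarrow> real) \<Rightarrow> real
   \<Rightarrow> (nat \<Rightarrow> real \<Rightarrow> real) \<Rightarrow> (nat \<Rightarrow> real \<Rightarrow> real)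
   \<Rightarrow> (nat \<Rightarrow> real \<Rightarrow> real) \<Rightarrow> (nat \<Rightarrow> real \<Rightarrow> real) \<Rightarrow> (nat \<Rightarrow> real \<Rightarrow> real) \<Rightarrow> real \<Rightarrow> real" where
  "cost_integrand kt M Kmin Kmax p \<beta> \<alpha> b c u v i t =
     (\<Sum>m\<in>{1..M}.
        (\<Sum>k\<in>grp kt m. p k) * b m (u m t)
        + \<alpha> * v m t * \<beta> t * c m (v m t)
          * (\<Sum>k\<in>grp kt m. real k * i k t * p k)
          * (\<Sum>k\<in>{Kmin..Kmax}. real k * p k / kbar p Kmin Kmax * (1 - i k t)))"

definition Wset ::
  "(nat \<Rightarrow> nat) \<Rightarrow> nat \<Rightarrow> nat \<Rightarrow> nat \<Rightarrow> (nat \<Rightarrow> real) \<Rightarrow> (real \<Rightarrow> real) \<Rightarrow> real \<Rightarrow> real \<Rightarrow> real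
   \<Rightarrow> real \<Rightarrow> (real \<Rightarrow> real) \<Rightarrow> real \<Rightarrow> real
   \<Rightarrow> (nat \<Rightarrow> real \<Rightarrow> real) \<Rightarrow> (nat \<Rightarrow> real \<Rightarrow> real)
   \<Rightarrow> ((nat \<Rightarrow> real \<Rightarrow> real) \<times> (nat \<Rightarrow> real \<Rightarrow> real)) set" where
  "Wset kt M Kmin Kmax p \<beta> \<alpha> i0 T B CP umax vmax b c =
     {(u, v). u \<in> Ctrl T CP M umax \<and> v \<in> Ctrl T CP M vmax \<and>
        (\<exists>i. is_solution kt M Kmin Kmax p \<beta> \<alpha> i0 T u v i \<and>
             (cost_integrand kt M Kmin Kmax p \<beta> \<alpha> b c u v i has_integral B) {0..T})}"

end

theory Submission
  imports Defs "HOL-Complex_Analysis.Great_Picard"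
begin

(* The controls in U and V are uniformly bounded and equicontinuous by the
   definition of Psi. The states stay in [0, 1]: in a coupled system of integral
   equations where each component, while nonpositive, decreases at most
   proportionally to the total negative part, a Gronwall-type argument on short
   windows shows that no component becomes negative; this applies to i_k and to
   1 - i_k. Hence the right-hand side is bounded by a constant L independent of
   the controls, all states are L-Lipschitz, and Arzela-Ascoli gives a common
   subsequence along which controls and states converge uniformly. Uniform
   convergence passes through sums, products of bounded sequences and composition
   with the continuous costs, and the integral commutes with uniform limits on
   [0, T]; so the limit states solve the equation driven by the limit controls and
   the budget constraint persists, i.e. the limit lies in W. *)

section \<open>Uniform limits\<close>

(* Unlike uniform_limit_integral, no continuity is assumed: the integrands
   below contain the merely bounded spreading rate. *)
lemma has_integral_uniform_limit:
  fixes f :: "nat \<Rightarrow> real \<Rightarrow> real"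
  assumes f: "\<And>n. (f n has_integral I n) {a..b}"
    and lim: "uniform_limit {a..b} f g sequentially" and I: "I \<longlonglongrightarrow> J"
  shows "(g has_integral J) {a..b}"
proof -
  have g: "g integrable_on {a..b}"
  proof (rule integrable_uniform_limit_real)
    fix e :: real assume "e > 0"
    then obtain N where "\<forall>n\<ge>N. \<forall>x\<in>{a..b}. dist (f n x) (g x) < e"
      using uniform_limitD[OF lim] unfolding eventually_sequentially by blast
    then have "\<forall>x\<in>{a..b}. norm (g x - f N x) \<le> e"
      by (force simp: dist_real_def abs_minus_commute)
    with f[of N] show "\<exists>h. (\<forall>x\<in>{a..b}. norm (g x - h x) \<le> e) \<and> h integrable_on {a..b}"
      by blast
  qed
  have "I \<longlonglongrightarrow> integral {a..b} g"
  proof (rule LIMSEQ_I)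
    fix r :: real assume "r > 0"
    define e where "e = r / (measure lborel {a..b} + 1)"
    have "e > 0" using \<open>r > 0\<close> by (simp add: e_def add_nonneg_pos)
    then obtain N where N: "\<And>n. n \<ge> N \<Longrightarrow> \<forall>x\<in>{a..b}. dist (f n x) (g x) < e"
      using uniform_limitD[OF lim] unfolding eventually_sequentially by blast
    have "norm (I n - integral {a..b} g) < r" if "n \<ge> N" for n
    proof -
      have "((\<lambda>x. f n x - g x) has_integral (I n - integral {a..b} g)) {a..b}"
        using f[of n] g by (auto intro: has_integral_diff)
      moreover have "\<forall>x\<in>{a..b}. norm (f n x - g x) \<le> e"
        using N[OF that] by (auto simp: dist_norm less_imp_le)
      ultimately have "norm (I n - integral {a..b} g) \<le> e * measure lborel {a..b}"
        using has_integral_bound[of e "\<lambda>x. f n x - g x" _ a b] \<open>e > 0\<close> by simp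
      also have "\<dots> < r"
        using \<open>r > 0\<close> by (simp add: e_def field_simps add_nonneg_pos)
      finally show ?thesis .
    qed
    then show "\<exists>N. \<forall>n\<ge>N. norm (I n - integral {a..b} g) < r" by blast
  qed
  with I have "J = integral {a..b} g" by (rule LIMSEQ_unique)
  with g show ?thesis by (simp add: integrable_integral)
qed

(* Uniform limits multiply only when the limits are bounded (uniform_lim_mult),
   so boundedness of the limit is carried along. *)
definition bounded_uniform_limit ::
    "'a set \<Rightarrow> ('n \<Rightarrow> 'a \<Rightarrow> real) \<Rightarrow> ('a \<Rightarrow> real) \<Rightarrow> 'n filter \<Rightarrow> bool" where
  "bounded_uniform_limit S f l F \<longleftrightarrow> uniform_limit S f l F \<and> bounded (l ` S)"

lemma bounded_uniform_limitI:
  assumes lim: "uniform_limit S f l F" and "F \<noteq> bot"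
    and bound: "\<And>n x. x \<in> S \<Longrightarrow> \<bar>f n x\<bar> \<le> Bd"
  shows "bounded_uniform_limit S f l F"
proof -
  have "\<bar>l x\<bar> \<le> Bd" if "x \<in> S" for x
    using tendsto_uniform_limitI[OF lim that] \<open>F \<noteq> bot\<close> bound[OF that]
    by (intro tendsto_upperbound[of "\<lambda>n. \<bar>f n x\<bar>"] tendsto_intros always_eventually) auto
  with lim show ?thesis
    unfolding bounded_uniform_limit_def bounded_real by blast
qed

lemma bounded_uniform_limit_const_fun: "bounded (h ` S) \<Longrightarrow> bounded_uniform_limit S (\<lambda>n. h) h F"
  unfolding bounded_uniform_limit_def by (simp add: uniform_limit_const)

lemma bounded_uniform_limit_const: "bounded_uniform_limit S (\<lambda>n s. c) (\<lambda>s. c) F"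
  by (rule bounded_uniform_limit_const_fun) (auto intro: bounded_subset[of "{c}"])

lemma bounded_uniform_limit_add:
  "bounded_uniform_limit S f l F \<Longrightarrow> bounded_uniform_limit S g m F \<Longrightarrow>
   bounded_uniform_limit S (\<lambda>n s. f n s + g n s) (\<lambda>s. l s + m s) F"
  unfolding bounded_uniform_limit_def by (auto intro: uniform_limit_add bounded_plus_comp)

lemma bounded_uniform_limit_diff:
  "bounded_uniform_limit S f l F \<Longrightarrow> bounded_uniform_limit S g m F \<Longrightarrow>
   bounded_uniform_limit S (\<lambda>n s. f n s - g n s) (\<lambda>s. l s - m s) F"
  unfolding bounded_uniform_limit_def by (auto intro: uniform_limit_minus bounded_minus_comp)

lemma bounded_mult_comp:
  fixes l m :: "'a \<Rightarrow> real"
  assumes "bounded (l ` S)" "bounded (m ` S)"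
  shows "bounded ((\<lambda>s. l s * m s) ` S)"
proof -
  obtain A B where "\<forall>x\<in>S. \<bar>l x\<bar> \<le> A" "\<forall>x\<in>S. \<bar>m x\<bar> \<le> B"
    using assms by (auto simp: bounded_real)
  then have "\<forall>x\<in>S. \<bar>l x * m x\<bar> \<le> A * B"
    by (auto simp: abs_mult intro: mult_mono')
  then show ?thesis by (auto simp: bounded_real)
qed

lemma bounded_uniform_limit_mult:
  "bounded_uniform_limit S f l F \<Longrightarrow> bounded_uniform_limit S g m F \<Longrightarrow>
   bounded_uniform_limit S (\<lambda>n s. f n s * g n s) (\<lambda>s. l s * m s) F"
  unfolding bounded_uniform_limit_def by (auto intro: uniform_lim_mult bounded_mult_comp)

lemma bounded_uniform_limit_sum:
  assumes "\<And>a. a \<in> A \<Longrightarrow> bounded_uniform_limit S (f a) (l a) F"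
  shows "bounded_uniform_limit S (\<lambda>n s. \<Sum>a\<in>A. f a n s) (\<lambda>s. \<Sum>a\<in>A. l a s) F"
  using assms
proof (induction A rule: infinite_finite_induct)
  case (insert a A)
  then show ?case by (simp add: bounded_uniform_limit_add)
qed (simp_all add: bounded_uniform_limit_const)

lemma bounded_uniform_limit_compose:
  fixes a b :: real
  assumes lim: "uniform_limit S f l F" and "F \<noteq> bot"
    and h: "continuous_on {a..b} h" and range: "\<And>n x. x \<in> S \<Longrightarrow> f n x \<in> {a..b}"
  shows "bounded_uniform_limit S (\<lambda>n s. h (f n s)) (\<lambda>s. h (l s)) F"
proof -
  have "l x \<in> {a..b}" if "x \<in> S" for x
    using tendsto_uniform_limitI[OF lim that] \<open>F \<noteq> bot\<close> range[OF that]
    by (intro Lim_in_closed_set[of "{a..b}" "\<lambda>n. f n x"] always_eventually) auto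
  then have "bounded ((\<lambda>s. h (l s)) ` S)"
    using compact_imp_bounded[OF compact_continuous_image[OF h compact_Icc]]
    by (rule_tac bounded_subset) auto
  moreover have "uniform_limit S (\<lambda>n s. h (f n s)) (\<lambda>s. h (l s)) F"
    using range by (intro uniform_limit_compose_uniformly_continuous_on[OF lim
        compact_uniformly_continuous[OF h compact_Icc]] always_eventually) auto
  ultimately show ?thesis unfolding bounded_uniform_limit_def by blast
qed

section \<open>Equicontinuous families\<close>

lemma Arzela_Ascoli_finite_family:
  fixes F :: "'j \<Rightarrow> nat \<Rightarrow> 'a::euclidean_space \<Rightarrow> 'b::{real_normed_vector,heine_borel}"
  assumes "finite J" "compact S"
    and bound: "\<And>j n x. j \<in> J \<Longrightarrow> x \<in> S \<Longrightarrow> norm (F j n x) \<le> Bd"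
    and equicont: "\<And>j x e. j \<in> J \<Longrightarrow> x \<in> S \<Longrightarrow> 0 < e \<Longrightarrow>
       \<exists>d>0. \<forall>n y. y \<in> S \<and> norm (x - y) < d \<longrightarrow> norm (F j n x - F j n y) < e"
  shows "\<exists>r g. strict_mono r \<and> (\<forall>j\<in>J. uniform_limit S (\<lambda>n. F j (r n)) (g j) sequentially)"
  using assms(1) bound equicont
proof (induction J rule: finite_induct)
  case empty
  show ?case using strict_mono_id by blast
next
  case (insert j J)
  then obtain r g where r: "strict_mono r"
    and lim: "\<forall>j\<in>J. uniform_limit S (\<lambda>n. F j (r n)) (g j) sequentially"
    by auto
  obtain h k where k: "strict_mono (k :: nat \<Rightarrow> nat)"
    and conv: "\<And>e. 0 < e \<Longrightarrow> \<exists>N. \<forall>n x. n \<ge> N \<and> x \<in> S \<longrightarrow> norm (F j (r (k n)) x - h x) < e"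
  proof (rule Arzela_Ascoli[of S "\<lambda>n. F j (r n)" Bd])
    show "\<exists>d>0. \<forall>n y. y \<in> S \<and> norm (x - y) < d \<longrightarrow> norm (F j (r n) x - F j (r n) y) < e"
      if "x \<in> S" "0 < e" for x e
      using insert.prems(2)[of j x e] that by blast
  qed (use assms(2) insert.prems(1) in auto)
  have "uniform_limit S (\<lambda>n. F j (r (k n))) h sequentially"
    unfolding uniform_limit_sequentially_iff dist_norm using conv by blast
  moreover have "uniform_limit S (\<lambda>n. F j' (r (k n))) (g j') sequentially" if "j' \<in> J" for j'
    using filterlim_compose[OF lim[rule_format, OF that] filterlim_subseq[OF k]]
    by (simp add: o_def)
  moreover have "strict_mono (\<lambda>n. r (k n))"
    using r k by (simp add: strict_mono_def)
  ultimately show ?case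
    by (intro exI[of _ "\<lambda>n. r (k n)"] exI[of _ "g(j := h)"]) auto
qed

lemma Psi_mono:
  assumes "\<And>\<epsilon>. \<epsilon> > 0 \<Longrightarrow> \<omega> \<epsilon> \<le> \<omega>' \<epsilon>"
  shows "Psi T \<omega> \<subseteq> Psi T \<omega>'"
proof
  fix \<sigma> assume \<sigma>: "\<sigma> \<in> Psi T \<omega>"
  show "\<sigma> \<in> Psi T \<omega>'"
    unfolding Psi_def
  proof (intro CollectI ballI allI impI)
    fix t s \<epsilon> :: real assume "t \<in> {0..T}" "s \<in> {0..T}" "\<epsilon> > 0" "\<bar>t - s\<bar> \<le> \<epsilon>"
    with \<sigma> have "\<bar>\<sigma> t - \<sigma> s\<bar> \<le> \<omega> \<epsilon>" unfolding Psi_def by blast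
    also have "\<dots> \<le> \<omega>' \<epsilon>" using assms \<open>\<epsilon> > 0\<close> .
    finally show "\<bar>\<sigma> t - \<sigma> s\<bar> \<le> \<omega>' \<epsilon>" .
  qed
qed

lemma lipschitz_in_Psi:
  assumes "L \<ge> 0" and lipschitz: "\<And>s t. s \<in> {0..T} \<Longrightarrow> t \<in> {0..T} \<Longrightarrow> \<bar>\<sigma> t - \<sigma> s\<bar> \<le> L * \<bar>t - s\<bar>"
  shows "\<sigma> \<in> Psi T (\<lambda>\<epsilon>. L * \<epsilon>)"
  unfolding Psi_def
proof (intro CollectI ballI allI impI)
  fix t s \<epsilon> :: real assume "t \<in> {0..T}" "s \<in> {0..T}" "\<bar>t - s\<bar> \<le> \<epsilon>"
  then have "\<bar>\<sigma> t - \<sigma> s\<bar> \<le> L * \<bar>t - s\<bar>" using lipschitz by blast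
  also have "\<dots> \<le> L * \<epsilon>" using \<open>L \<ge> 0\<close> \<open>\<bar>t - s\<bar> \<le> \<epsilon>\<close> by (rule mult_left_mono[rotated])
  finally show "\<bar>\<sigma> t - \<sigma> s\<bar> \<le> L * \<epsilon>" .
qed

lemma Psi_uniformly_equicontinuous:
  assumes \<omega>: "(\<omega> \<longlongrightarrow> 0) (at_right 0)" and "e > 0"
  obtains d where "d > 0"
    "\<And>\<sigma> x y. \<sigma> \<in> Psi T \<omega> \<Longrightarrow> x \<in> {0..T} \<Longrightarrow> y \<in> {0..T} \<Longrightarrow> \<bar>x - y\<bar> < d \<Longrightarrow> \<bar>\<sigma> x - \<sigma> y\<bar> < e"
proof -
  obtain d where "d > 0" and d: "\<And>\<epsilon>. 0 < \<epsilon> \<Longrightarrow> \<epsilon> < d \<Longrightarrow> \<omega> \<epsilon> < e"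
    using order_tendstoD(2)[OF \<omega> \<open>e > 0\<close>] unfolding eventually_at_right_field by auto
  show ?thesis
  proof
    show "d / 2 > 0" using \<open>d > 0\<close> by simp
    fix \<sigma> x y assume "\<sigma> \<in> Psi T \<omega>" "x \<in> {0..T}" "y \<in> {0..T}" "\<bar>x - y\<bar> < d / 2"
    then have "\<bar>\<sigma> x - \<sigma> y\<bar> \<le> \<omega> (d / 2)"
      using \<open>d > 0\<close> unfolding Psi_def by auto
    also have "\<dots> < e" using d \<open>d > 0\<close> by simp
    finally show "\<bar>\<sigma> x - \<sigma> y\<bar> < e" .
  qed
qed

lemma Psi_closed:
  assumes "\<And>n. f n \<in> Psi T \<omega>" and "\<And>t. t \<in> {0..T} \<Longrightarrow> (\<lambda>n. f n t) \<longlonglongrightarrow> g t"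
  shows "g \<in> Psi T \<omega>"
  unfolding Psi_def
proof (intro CollectI ballI allI impI)
  fix t s \<epsilon> :: real assume "t \<in> {0..T}" "s \<in> {0..T}" "\<epsilon> > 0" "\<bar>t - s\<bar> \<le> \<epsilon>"
  with assms show "\<bar>g t - g s\<bar> \<le> \<omega> \<epsilon>"
    by (intro LIMSEQ_le_const2[of "\<lambda>n. \<bar>f n t - f n s\<bar>"] tendsto_intros) (auto simp: Psi_def)
qed

lemma Psi_Arzela_Ascoli:
  fixes F :: "'j \<Rightarrow> nat \<Rightarrow> real \<Rightarrow> real"
  assumes "finite J" and \<omega>: "(\<omega> \<longlongrightarrow> 0) (at_right 0)"
    and Psi: "\<And>j n. j \<in> J \<Longrightarrow> F j n \<in> Psi T \<omega>"
    and bound: "\<And>j n t. j \<in> J \<Longrightarrow> t \<in> {0..T} \<Longrightarrow> \<bar>F j n t\<bar> \<le> Bd"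
  shows "\<exists>r g. strict_mono r \<and> (\<forall>j\<in>J. uniform_limit {0..T} (\<lambda>n. F j (r n)) (g j) sequentially)"
proof (rule Arzela_Ascoli_finite_family[OF \<open>finite J\<close> compact_Icc])
  show "\<And>j n x. j \<in> J \<Longrightarrow> x \<in> {0..T} \<Longrightarrow> norm (F j n x) \<le> Bd"
    using bound by simp
  fix j x and e :: real assume "j \<in> J" "x \<in> {0..T}" "0 < e"
  then obtain d where "d > 0" and d: "\<And>\<sigma> y. \<sigma> \<in> Psi T \<omega> \<Longrightarrow> y \<in> {0..T} \<Longrightarrow> \<bar>x - y\<bar> < d \<Longrightarrow> \<bar>\<sigma> x - \<sigma> y\<bar> < e"
    using Psi_uniformly_equicontinuous[OF \<omega>] by metis
  then show "\<exists>d>0. \<forall>n y. y \<in> {0..T} \<and> norm (x - y) < d \<longrightarrow> norm (F j n x - F j n y) < e"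
    using Psi[OF \<open>j \<in> J\<close>] by auto
qed

lemma Ctrl_closed:
  assumes f: "\<And>n. f n \<in> Ctrl T \<omega> M bnd"
    and lim: "\<And>m t. m \<in> {1..M} \<Longrightarrow> t \<in> {0..T} \<Longrightarrow> (\<lambda>n. f n m t) \<longlonglongrightarrow> g m t"
  shows "g \<in> Ctrl T \<omega> M bnd"
  unfolding Ctrl_def
proof (intro CollectI ballI conjI)
  fix m assume m: "m \<in> {1..M}"
  show "g m \<in> Psi T \<omega>"
    by (rule Psi_closed[of "\<lambda>n. f n m"]) (use f lim m in \<open>auto simp: Ctrl_def\<close>)
  fix t assume t: "t \<in> {0..T}"
  have "g m t \<in> {0..bnd}"
    using f m t unfolding Ctrl_def
    by (intro Lim_in_closed_set[OF closed_atLeastAtMost always_eventually sequentially_bot lim]) auto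
  then show "0 \<le> g m t" "g m t \<le> bnd" by auto
qed

section \<open>Sign preservation for systems of integral equations\<close>

lemma last_zero_before_negative:
  fixes f :: "real \<Rightarrow> real"
  assumes cont: "continuous_on {s..r} f" and "s \<le> r" "f s \<ge> 0" "f r < 0"
  obtains c where "c \<in> {s..r}" "f c = 0" "\<And>x. x \<in> {c..r} \<Longrightarrow> f x \<le> 0"
proof -
  define Z where "Z = {x \<in> {s..r}. 0 \<le> f x}"
  have "closed Z"
    unfolding Z_def by (rule continuous_on_closed_Collect_le[OF continuous_on_const cont closed_atLeastAtMost])
  moreover have "bounded Z"
    by (rule bounded_subset[OF bounded_closed_interval]) (auto simp: Z_def)
  ultimately have "compact Z" by (simp add: compact_eq_bounded_closed)
  moreover have "s \<in> Z" using assms by (simp add: Z_def)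
  ultimately obtain c where "c \<in> Z" and c_max: "\<forall>z\<in>Z. z \<le> c"
    using compact_attains_sup[of Z] by auto
  then have c: "s \<le> c" "c \<le> r" "f c \<ge> 0" by (auto simp: Z_def)
  have "f c \<le> 0"
  proof (rule ccontr)
    assume "\<not> f c \<le> 0"
    have "continuous_on {c..r} f"
      by (rule continuous_on_subset[OF cont]) (use c in auto)
    then obtain x where "c \<le> x" "x \<le> r" "f x = 0"
      using IVT2'[of f r 0 c] c \<open>f r < 0\<close> by auto
    then have "x \<in> Z" using c by (simp add: Z_def)
    with c_max have "x \<le> c" by blast
    with \<open>c \<le> x\<close> \<open>f x = 0\<close> \<open>\<not> f c \<le> 0\<close> show False by simp
  qed
  have "f x \<le> 0" if "x \<in> {c..r}" for x
  proof (cases "x = c")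
    case False
    have "x \<notin> Z" using c_max that False by force
    with that c show ?thesis by (auto simp: Z_def)
  qed (use \<open>f c \<le> 0\<close> in simp)
  with c \<open>f c \<le> 0\<close> show ?thesis by (intro that[of c]) auto
qed

lemma lower_bound_while_nonpos:
  fixes f g :: "real \<Rightarrow> real"
  assumes cont: "continuous_on {s..r} f" and "s \<le> r" "f s \<ge> 0" "K \<ge> 0"
    and int: "\<And>x. x \<in> {s..r} \<Longrightarrow> (g has_integral (f r - f x)) {x..r}"
    and lower: "\<And>x. x \<in> {s..r} \<Longrightarrow> f x \<le> 0 \<Longrightarrow> g x \<ge> - K"
  shows "f r \<ge> - K * (r - s)"
proof (cases "f r \<ge> 0")
  case True
  moreover have "K * (r - s) \<ge> 0" using assms by simp
  ultimately show ?thesis by linarith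
next
  case False
  then obtain c where c: "c \<in> {s..r}" "f c = 0" and nonpos: "\<And>x. x \<in> {c..r} \<Longrightarrow> f x \<le> 0"
    using last_zero_before_negative[OF cont \<open>s \<le> r\<close> \<open>f s \<ge> 0\<close>] by auto
  have "measure lborel {c..r} *\<^sub>R (- K) \<le> f r - f c"
    by (rule has_integral_le[OF has_integral_const_real int[OF c(1)]]) (use c nonpos lower in auto)
  then have "- K * (r - c) \<le> f r" using c by (simp add: algebra_simps)
  moreover have "K * (r - c) \<le> K * (r - s)" using c \<open>K \<ge> 0\<close> by (intro mult_left_mono) auto
  ultimately show ?thesis by simp
qed

(* On the window, the total negative part N is at most card P * C * (d - c)
   times its own maximum, hence vanishes. *)
lemma integral_system_nonneg_step:
  fixes y g :: "'k \<Rightarrow> real \<Rightarrow> real"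
  assumes "finite P" "C \<ge> 0"
    and cont: "\<And>k. k \<in> P \<Longrightarrow> continuous_on {a..b} (y k)"
    and int: "\<And>k s t. k \<in> P \<Longrightarrow> a \<le> s \<Longrightarrow> s \<le> t \<Longrightarrow> t \<le> b \<Longrightarrow>
                (g k has_integral (y k t - y k s)) {s..t}"
    and lower: "\<And>k s. k \<in> P \<Longrightarrow> s \<in> {a..b} \<Longrightarrow> y k s \<le> 0 \<Longrightarrow>
                  g k s \<ge> - C * (\<Sum>j\<in>P. max 0 (- y j s))"
    and window: "a \<le> c" "c \<le> d" "d \<le> b" and short: "real (card P) * C * (d - c) \<le> 1 / 2"
    and start: "\<And>k. k \<in> P \<Longrightarrow> y k c \<ge> 0"
    and "k \<in> P" "t \<in> {c..d}"
  shows "y k t \<ge> 0"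
proof -
  define N where "N x = (\<Sum>j\<in>P. max 0 (- y j x))" for x
  have "continuous_on {c..d} N"
    unfolding N_def using window by (intro continuous_intros continuous_on_subset[OF cont]) auto
  then obtain x0 where "x0 \<in> {c..d}" and "\<forall>x\<in>{c..d}. N x \<le> N x0"
    using continuous_attains_sup[of "{c..d}" N] \<open>c \<le> d\<close> by auto
  then have N_max: "N x \<le> N x0" if "x \<in> {c..d}" for x
    using that by blast
  have N_nonneg: "N x \<ge> 0" for x
    unfolding N_def by (intro sum_nonneg) auto
  have neg_part: "max 0 (- y j x) \<le> C * N x0 * (d - c)" if "j \<in> P" "x \<in> {c..d}" for j x
  proof -
    have "y j x \<ge> - (C * N x0) * (x - c)"
    proof (rule lower_bound_while_nonpos)
      show "continuous_on {c..x} (y j)"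
        using cont[OF \<open>j \<in> P\<close>] by (rule continuous_on_subset) (use window that in auto)
      show "- (C * N x0) \<le> g j z" if "z \<in> {c..x}" "y j z \<le> 0" for z
      proof -
        have z: "z \<in> {c..d}" using that(1) \<open>x \<in> {c..d}\<close> by auto
        have "- (C * N x0) \<le> - C * N z"
          using N_max[OF z] \<open>C \<ge> 0\<close> by (simp add: mult_left_mono)
        also have "\<dots> \<le> g j z"
          using lower[OF \<open>j \<in> P\<close> _ \<open>y j z \<le> 0\<close>] z window by (simp add: N_def)
        finally show ?thesis .
      qed
    qed (use that window start int \<open>C \<ge> 0\<close> N_nonneg in auto)
    moreover have "C * N x0 * (x - c) \<le> C * N x0 * (d - c)"
      using that \<open>C \<ge> 0\<close> N_nonneg by (intro mult_left_mono) auto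
    moreover have "0 \<le> C * N x0 * (d - c)"
      using \<open>C \<ge> 0\<close> N_nonneg \<open>c \<le> d\<close> by simp
    ultimately show ?thesis by simp
  qed
  have N_small: "N x \<le> N x0 / 2" if "x \<in> {c..d}" for x
  proof -
    have "N x \<le> real (card P) * (C * N x0 * (d - c))"
      unfolding N_def[of x] by (rule sum_bounded_above) (use neg_part that in blast)
    also have "\<dots> = (real (card P) * C * (d - c)) * N x0" by simp
    also have "\<dots> \<le> 1 / 2 * N x0" by (rule mult_right_mono[OF short N_nonneg])
    finally show ?thesis by simp
  qed
  have "N x0 \<le> 0" using N_small[OF \<open>x0 \<in> {c..d}\<close>] by simp
  then have "N t \<le> 0" using N_max[OF \<open>t \<in> {c..d}\<close>] by simp
  moreover have "max 0 (- y k t) \<le> N t"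
    unfolding N_def by (rule member_le_sum[OF \<open>k \<in> P\<close> _ \<open>finite P\<close>]) auto
  ultimately show ?thesis by simp
qed

lemma integral_system_nonneg:
  fixes y g :: "'k \<Rightarrow> real \<Rightarrow> real"
  assumes "finite P" "C \<ge> 0"
    and cont: "\<And>k. k \<in> P \<Longrightarrow> continuous_on {a..b} (y k)"
    and init: "\<And>k. k \<in> P \<Longrightarrow> y k a \<ge> 0"
    and int: "\<And>k s t. k \<in> P \<Longrightarrow> a \<le> s \<Longrightarrow> s \<le> t \<Longrightarrow> t \<le> b \<Longrightarrow>
                (g k has_integral (y k t - y k s)) {s..t}"
    and lower: "\<And>k s. k \<in> P \<Longrightarrow> s \<in> {a..b} \<Longrightarrow> y k s \<le> 0 \<Longrightarrow>
                  g k s \<ge> - C * (\<Sum>j\<in>P. max 0 (- y j s))"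
    and "k \<in> P" "t \<in> {a..b}"
  shows "y k t \<ge> 0"
proof -
  define \<delta> where "\<delta> = 1 / (2 * (real (card P) * C + 1))"
  have "real (card P) * C \<ge> 0" using \<open>C \<ge> 0\<close> by simp
  then have "\<delta> > 0" and \<delta>_short: "real (card P) * C * \<delta> \<le> 1 / 2"
    by (simp_all add: \<delta>_def field_simps)
  have "\<forall>k\<in>P. \<forall>t\<in>{a..b}. t \<le> a + real n * \<delta> \<longrightarrow> y k t \<ge> 0" for n
  proof (induction n)
    case 0
    show ?case using init by force
  next
    case (Suc n)
    show ?case
    proof (intro ballI impI)
      fix k t assume "k \<in> P" "t \<in> {a..b}" "t \<le> a + real (Suc n) * \<delta>"
      define c where "c = a + real n * \<delta>"
      show "y k t \<ge> 0"
      proof (cases "t \<le> c")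
        case True
        with Suc \<open>k \<in> P\<close> \<open>t \<in> {a..b}\<close> show ?thesis by (simp add: c_def)
      next
        case False
        then have window: "a \<le> c" "c \<le> t" "t - c \<le> \<delta>"
          using \<open>t \<le> a + real (Suc n) * \<delta>\<close> \<open>\<delta> > 0\<close> by (auto simp: c_def algebra_simps)
        have "real (card P) * C * (t - c) \<le> real (card P) * C * \<delta>"
          using window(3) \<open>C \<ge> 0\<close> by (intro mult_left_mono) auto
        then have short: "real (card P) * C * (t - c) \<le> 1 / 2"
          using \<delta>_short by linarith
        have start: "y j c \<ge> 0" if "j \<in> P" for j
          using Suc that window \<open>t \<in> {a..b}\<close> by (simp add: c_def)
        show ?thesis
          using integral_system_nonneg_step[OF \<open>finite P\<close> \<open>C \<ge> 0\<close> cont int lower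
              window(1,2) _ short start \<open>k \<in> P\<close>] \<open>t \<in> {a..b}\<close> window
          by simp
      qed
    qed
  qed
  moreover obtain n where "b - a < real n * \<delta>"
    using reals_Archimedean3[OF \<open>\<delta> > 0\<close>] by blast
  then have "t \<le> a + real n * \<delta>"
    using \<open>t \<in> {a..b}\<close> by simp
  ultimately show ?thesis
    using \<open>k \<in> P\<close> \<open>t \<in> {a..b}\<close> by blast
qed

section \<open>The controlled epidemic model\<close>

lemma UN_grp:
  assumes "\<And>m. m < M \<Longrightarrow> kt m \<le> kt (Suc m)"
  shows "(\<Union>m\<in>{1..M}. grp kt m) = {kt 0 + 1..kt M}"
  using assms
proof (induction M)
  case (Suc M)
  then have IH: "(\<Union>m\<in>{1..M}. grp kt m) = {kt 0 + 1..kt M}" by simp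
  have "kt 0 \<le> kt M"
    using Suc.prems by (induction M) (auto intro: order_trans)
  have "kt M \<le> kt (Suc M)" using Suc.prems by simp
  have "(\<Union>m\<in>{1..Suc M}. grp kt m) = grp kt (Suc M) \<union> (\<Union>m\<in>{1..M}. grp kt m)"
    by (simp add: atLeastAtMostSuc_conv)
  also have "\<dots> = {kt M + 1..kt (Suc M)} \<union> {kt 0 + 1..kt M}"
    unfolding IH by (simp add: grp_def)
  also have "\<dots> = {kt 0 + 1..kt (Suc M)}"
    using \<open>kt 0 \<le> kt M\<close> \<open>kt M \<le> kt (Suc M)\<close> by auto
  finally show ?case .
qed (simp add: grp_def)

locale network_epidemic =
  fixes kt :: "nat \<Rightarrow> nat" and M Kmin Kmax :: nat and p :: "nat \<Rightarrow> real" and \<beta> :: "real \<Rightarrow> real"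
    and \<alpha> i0 T umax vmax \<beta>max :: real
  assumes Kmin: "Kmin \<ge> 1" and kt0: "kt 0 = Kmin - 1" and ktM: "kt M = Kmax"
    and kt_mono: "strict_mono_on {0..M} kt"
    and p_nonneg: "\<forall>k\<in>{Kmin..Kmax}. p k \<ge> 0"
    and p_sum: "(\<Sum>k\<in>{Kmin..Kmax}. p k) = 1"
    and T: "T > 0" and i0: "0 \<le> i0" "i0 \<le> 1"
    and \<alpha>: "\<alpha> > 0" and umax: "umax > 0" and vmax: "vmax \<ge> 0"
    and \<alpha>v: "\<alpha> * (1 + vmax) \<le> 1"
    and \<beta>: "\<forall>t\<in>{0..T}. 0 \<le> \<beta> t \<and> \<beta> t \<le> \<beta>max"
begin

abbreviation q :: "nat \<Rightarrow> real" where
  "q l \<equiv> qq p Kmin Kmax l"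

definition classes :: "(nat \<times> nat) set" where
  "classes = Sigma {1..M} (grp kt)"

definition force :: "(nat \<Rightarrow> real \<Rightarrow> real) \<Rightarrow> (nat \<Rightarrow> real \<Rightarrow> real) \<Rightarrow> real \<Rightarrow> real" where
  "force v i s = (\<Sum>pp\<in>{1..M}. \<Sum>l\<in>grp kt pp. q l * i l s * (\<alpha> * (1 + v pp s)))"

definition rhs ::
    "(nat \<Rightarrow> real \<Rightarrow> real) \<Rightarrow> (nat \<Rightarrow> real \<Rightarrow> real) \<Rightarrow> (nat \<Rightarrow> real \<Rightarrow> real) \<Rightarrow> nat \<Rightarrow> nat \<Rightarrow> real \<Rightarrow> real"
  where "rhs u v i m k s = \<beta> s * (1 - i k s) * real k * force v i s + u m s * (1 - i k s)"

definition rate ::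
    "(nat \<Rightarrow> real \<Rightarrow> real) \<Rightarrow> (nat \<Rightarrow> real \<Rightarrow> real) \<Rightarrow> (nat \<Rightarrow> real \<Rightarrow> real) \<Rightarrow> nat \<Rightarrow> nat \<Rightarrow> real \<Rightarrow> real"
  where "rate u v i m k s = \<beta> s * real k * force v i s + u m s"

definition ctrl_bounds :: "real \<Rightarrow> (nat \<Rightarrow> real \<Rightarrow> real) \<Rightarrow> bool" where
  "ctrl_bounds bd u \<longleftrightarrow> (\<forall>m\<in>{1..M}. \<forall>t\<in>{0..T}. 0 \<le> u m t \<and> u m t \<le> bd)"

definition qsum :: real where
  "qsum = (\<Sum>(m, k)\<in>classes. q k)"

definition lipschitz_const :: real where
  "lipschitz_const = \<beta>max * real Kmax * qsum + umax"

lemma finite_classes: "finite classes"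
  unfolding classes_def grp_def by auto

lemma UN_grp_eq: "(\<Union>m\<in>{1..M}. grp kt m) = {Kmin..Kmax}"
proof -
  have "kt m \<le> kt (Suc m)" if "m < M" for m
    using strict_mono_onD[OF kt_mono, of m "Suc m"] that by simp
  then show ?thesis
    using UN_grp[of M kt] kt0 ktM Kmin by simp
qed

lemma grp_mem_range: "l \<in> grp kt m \<Longrightarrow> m \<in> {1..M} \<Longrightarrow> l \<in> {Kmin..Kmax}"
  using UN_grp_eq by blast

lemma classesD:
  assumes "(m, k) \<in> classes"
  shows "m \<in> {1..M}" "k \<in> grp kt m" "k \<in> {Kmin..Kmax}"
  using assms UN_grp_eq unfolding classes_def by auto

lemma degree_in_classes:
  assumes "k \<in> {Kmin..Kmax}"
  obtains m where "(m, k) \<in> classes"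
proof -
  obtain m where "m \<in> {1..M}" "k \<in> grp kt m"
    using assms UN_grp_eq by blast
  then show ?thesis using that unfolding classes_def by blast
qed

lemma kbar_pos: "kbar p Kmin Kmax > 0"
proof -
  have "(\<Sum>k\<in>{Kmin..Kmax}. p k) \<le> (\<Sum>k\<in>{Kmin..Kmax}. real k * p k)"
    using Kmin p_nonneg by (intro sum_mono) (auto intro: mult_right_mono[of 1 "real k" "p k" for k, simplified])
  then show ?thesis
    using p_sum unfolding kbar_def by simp
qed

lemma q_nonneg:
  assumes "l \<in> {Kmin..Kmax}"
  shows "q l \<ge> 0"
proof -
  have "p (l + 1) \<ge> 0" if "l + 1 \<le> Kmax"
    using p_nonneg assms that by auto
  then show ?thesis
    unfolding qq_def using kbar_pos by auto
qed

lemma q_le_qsum: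
  assumes "(m, k) \<in> classes"
  shows "q k \<le> qsum"
proof -
  have "(\<lambda>(m, k). q k) (m, k) \<le> (\<Sum>j\<in>classes. (\<lambda>(m, k). q k) j)"
  proof (rule member_le_sum[OF assms _ finite_classes])
    fix j assume "j \<in> classes - {(m, k)}"
    then show "0 \<le> (\<lambda>(m, k). q k) j" by (cases j) (auto intro: q_nonneg dest: classesD(3))
  qed
  then show ?thesis by (simp add: qsum_def)
qed

lemma qsum_nonneg: "qsum \<ge> 0"
  unfolding qsum_def
proof (rule sum_nonneg)
  fix j assume "j \<in> classes"
  then show "0 \<le> (\<lambda>(m, k). q k) j" by (cases j) (auto intro: q_nonneg dest: classesD(3))
qed

lemma beta_bounded: "bounded (\<beta> ` {0..T})"
  unfolding bounded_real using \<beta> by (intro exI[of _ \<beta>max]) auto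

lemma beta_max_nonneg: "\<beta>max \<ge> 0"
  using \<beta> T by force

lemma force_eq_sum_classes:
  "force v i s = (\<Sum>(m, k)\<in>classes. q k * i k s * (\<alpha> * (1 + v m s)))"
  unfolding force_def classes_def by (subst sum.Sigma) (auto simp: grp_def)

lemma rhs_eq: "rhs u v i m k s = (1 - i k s) * rate u v i m k s"
  unfolding rhs_def rate_def by (simp add: algebra_simps)

lemma is_solution_iff:
  "is_solution kt M Kmin Kmax p \<beta> \<alpha> i0 T u v i \<longleftrightarrow>
   (\<forall>m\<in>{1..M}. \<forall>k\<in>grp kt m. \<forall>t\<in>{0..T}. (rhs u v i m k has_integral (i k t - i0)) {0..t})"
  unfolding is_solution_def rhs_def force_def by simp

lemma Ctrl_ctrl_bounds: "u \<in> Ctrl T CP M bd \<Longrightarrow> ctrl_bounds bd u"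
  unfolding Ctrl_def ctrl_bounds_def by auto

lemma weight_bounds:
  assumes "ctrl_bounds vmax v" "m \<in> {1..M}" "s \<in> {0..T}"
  shows "0 \<le> \<alpha> * (1 + v m s)" "\<alpha> * (1 + v m s) \<le> 1"
proof -
  have "0 \<le> v m s" "v m s \<le> vmax"
    using assms unfolding ctrl_bounds_def by auto
  then show "0 \<le> \<alpha> * (1 + v m s)" using \<alpha> by simp
  have "\<alpha> * (1 + v m s) \<le> \<alpha> * (1 + vmax)"
    using \<open>v m s \<le> vmax\<close> \<alpha> by (intro mult_left_mono) auto
  also have "\<dots> \<le> 1" by (rule \<alpha>v)
  finally show "\<alpha> * (1 + v m s) \<le> 1" .
qed

context
  fixes u v i
  assumes sol: "is_solution kt M Kmin Kmax p \<beta> \<alpha> i0 T u v i"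
begin

lemma solution_has_integral_from_0:
  assumes "(m, k) \<in> classes" "t \<in> {0..T}"
  shows "(rhs u v i m k has_integral (i k t - i0)) {0..t}"
  by (rule is_solution_iff[THEN iffD1, OF sol, rule_format, OF classesD(1,2)[OF assms(1)] assms(2)])

lemma solution_has_integral:
  assumes "(m, k) \<in> classes" "0 \<le> s" "s \<le> t" "t \<le> T"
  shows "(rhs u v i m k has_integral (i k t - i k s)) {s..t}"
proof -
  note from0 = solution_has_integral_from_0[OF assms(1)]
  have "rhs u v i m k integrable_on {0..T}"
    using from0[of T] T by (simp add: has_integral_integrable)
  then have "rhs u v i m k integrable_on {s..t}"
    by (rule integrable_subinterval_real) (use assms in simp)
  then obtain J where J: "(rhs u v i m k has_integral J) {s..t}"
    by blast
  have "(rhs u v i m k has_integral (i k s - i0 + J)) {0..t}"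
    by (rule has_integral_combine[OF _ _ from0[of s] J]) (use assms in simp_all)
  moreover have "(rhs u v i m k has_integral (i k t - i0)) {0..t}"
    using from0[of t] assms by simp
  ultimately have "i k s - i0 + J = i k t - i0"
    by (rule has_integral_unique)
  then have "J = i k t - i k s" by simp
  with J show ?thesis by simp
qed

lemma solution_initial:
  assumes "(m, k) \<in> classes"
  shows "i k 0 = i0"
proof -
  have "(rhs u v i m k has_integral (i k 0 - i0)) {0..0}"
    using solution_has_integral_from_0[OF assms, of 0] T by simp
  then have "i k 0 - i0 = 0"
    by (rule has_integral_unique[OF _ has_integral_null_real]) simp
  then show ?thesis by simp
qed

lemma solution_continuous:
  assumes "(m, k) \<in> classes"
  shows "continuous_on {0..T} (i k)"
proof -
  have "rhs u v i m k integrable_on {0..T}"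
    by (rule has_integral_integrable[OF solution_has_integral[OF assms]]) (use T in auto)
  then have "continuous_on {0..T} (\<lambda>t. i0 + integral {0..t} (rhs u v i m k))"
    by (intro continuous_on_add continuous_on_const indefinite_integral_continuous_1)
  moreover have "i0 + integral {0..t} (rhs u v i m k) = i k t" if "t \<in> {0..T}" for t
    using solution_has_integral[OF assms, of 0 t] solution_initial[OF assms] that
    by (simp add: integral_unique)
  ultimately show ?thesis
    by (rule continuous_on_eq)
qed

lemma solution_bounded:
  obtains Bi where "\<And>m k s. (m, k) \<in> classes \<Longrightarrow> s \<in> {0..T} \<Longrightarrow> \<bar>i k s\<bar> \<le> Bi"
proof -
  have "bounded (i k ` {0..T})" if "(m, k) \<in> classes" for m k
    using compact_continuous_image[OF solution_continuous[OF that] compact_Icc]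
    by (rule compact_imp_bounded)
  then have "bounded (\<Union>(m, k)\<in>classes. i k ` {0..T})"
    using finite_classes by (auto intro: bounded_UN)
  then obtain Bi where Bi: "\<forall>x\<in>(\<Union>(m, k)\<in>classes. i k ` {0..T}). \<bar>x\<bar> \<le> Bi"
    unfolding bounded_real by blast
  show ?thesis
  proof (rule that)
    fix m k s assume "(m, k) \<in> classes" "s \<in> {0..T}"
    then have "i k s \<in> (\<Union>(m, k)\<in>classes. i k ` {0..T})" by blast
    with Bi show "\<bar>i k s\<bar> \<le> Bi" by blast
  qed
qed

end

lemma force_abs_le:
  assumes v: "ctrl_bounds vmax v" and s: "s \<in> {0..T}"
    and bound: "\<And>m k. (m, k) \<in> classes \<Longrightarrow> \<bar>i k s\<bar> \<le> Bi"
  shows "\<bar>force v i s\<bar> \<le> Bi * qsum"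
proof -
  have "\<bar>force v i s\<bar> \<le> (\<Sum>j\<in>classes. \<bar>(\<lambda>(m, k). q k * i k s * (\<alpha> * (1 + v m s))) j\<bar>)"
    unfolding force_eq_sum_classes by (rule sum_abs)
  also have "\<dots> \<le> (\<Sum>j\<in>classes. Bi * (\<lambda>(m, k). q k) j)"
  proof (rule sum_mono)
    fix j assume "j \<in> classes"
    then obtain m k where j: "j = (m, k)" and mk: "(m, k) \<in> classes" by (cases j) auto
    define w where "w = \<alpha> * (1 + v m s)"
    have w: "0 \<le> w" "w \<le> 1"
      using weight_bounds[OF v classesD(1)[OF mk] s] by (auto simp: w_def)
    have "\<bar>q k * i k s * w\<bar> = q k * (\<bar>i k s\<bar> * w)"
      using q_nonneg[OF classesD(3)[OF mk]] w by (simp add: abs_mult)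
    also have "\<dots> \<le> q k * Bi"
      using q_nonneg[OF classesD(3)[OF mk]] w bound[OF mk]
      by (intro mult_left_mono order_trans[OF mult_right_le_one_le]) auto
    finally show "\<bar>(\<lambda>(m, k). q k * i k s * (\<alpha> * (1 + v m s))) j\<bar> \<le> Bi * (\<lambda>(m, k). q k) j"
      by (simp add: j w_def mult.commute)
  qed
  also have "\<dots> = Bi * qsum"
    by (simp add: qsum_def sum_distrib_left)
  finally show ?thesis .
qed

lemma force_lower_bound:
  assumes v: "ctrl_bounds vmax v" and s: "s \<in> {0..T}"
  shows "force v i s \<ge> - qsum * (\<Sum>(m, k)\<in>classes. max 0 (- i k s))"
proof -
  have "(\<Sum>j\<in>classes. - qsum * (\<lambda>(m, k). max 0 (- i k s)) j) \<le> force v i s"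
    unfolding force_eq_sum_classes
  proof (rule sum_mono)
    fix j assume "j \<in> classes"
    then obtain m k where j: "j = (m, k)" and mk: "(m, k) \<in> classes" by (cases j) auto
    have q: "0 \<le> q k" "q k \<le> qsum"
      using q_nonneg[OF classesD(3)[OF mk]] q_le_qsum[OF mk] by auto
    define w where "w = \<alpha> * (1 + v m s)"
    have w: "0 \<le> w" "w \<le> 1"
      using weight_bounds[OF v classesD(1)[OF mk] s] by (auto simp: w_def)
    have "- qsum * max 0 (- i k s) \<le> q k * i k s * w"
    proof (cases "i k s \<ge> 0")
      case True
      then show ?thesis using q w qsum_nonneg by simp
    next
      case False
      then have "- qsum * max 0 (- i k s) \<le> q k * i k s"
        using q by (simp add: mult_right_mono_neg)
      also have "\<dots> \<le> q k * i k s * w"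
      proof -
        have "0 \<le> (q k * i k s) * (w - 1)"
          using q w False by (intro mult_nonpos_nonpos) (auto simp: mult_nonneg_nonpos)
        then show ?thesis by (simp add: algebra_simps)
      qed
      finally show ?thesis .
    qed
    then show "- qsum * (\<lambda>(m, k). max 0 (- i k s)) j \<le> (\<lambda>(m, k). q k * i k s * (\<alpha> * (1 + v m s))) j"
      by (simp add: j w_def)
  qed
  then show ?thesis
    by (simp add: sum_distrib_left)
qed

lemma lipschitz_const_nonneg: "lipschitz_const \<ge> 0"
  unfolding lipschitz_const_def using beta_max_nonneg qsum_nonneg umax by simp

context
  fixes u v
  assumes u: "ctrl_bounds umax u" and v: "ctrl_bounds vmax v"
begin

lemma rate_abs_le:
  assumes mk: "(m, k) \<in> classes" and s: "s \<in> {0..T}"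
    and bound: "\<And>m' k'. (m', k') \<in> classes \<Longrightarrow> \<bar>i k' s\<bar> \<le> Bi"
  shows "\<bar>rate u v i m k s\<bar> \<le> \<beta>max * real Kmax * (Bi * qsum) + umax"
proof -
  have "0 \<le> \<beta> s" and bk: "\<beta> s * real k \<le> \<beta>max * real Kmax"
    using \<beta> s classesD(3)[OF mk] beta_max_nonneg by (auto intro: mult_mono)
  have "\<beta> s * real k * \<bar>force v i s\<bar> \<le> \<beta>max * real Kmax * (Bi * qsum)"
    using mult_mono[OF bk force_abs_le[where i = i and Bi = Bi, OF v s bound]] beta_max_nonneg
    by simp
  then have "\<bar>\<beta> s * real k * force v i s\<bar> \<le> \<beta>max * real Kmax * (Bi * qsum)"
    using \<open>0 \<le> \<beta> s\<close> by (simp add: abs_mult)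
  moreover have "\<bar>u m s\<bar> \<le> umax"
    using u classesD(1)[OF mk] s unfolding ctrl_bounds_def by auto
  ultimately show ?thesis
    unfolding rate_def by linarith
qed

lemma neg_rhs_lower_bound:
  assumes mk: "(m, k) \<in> classes" and s: "s \<in> {0..T}" and "1 - i k s \<le> 0"
    and bound: "\<And>m' k'. (m', k') \<in> classes \<Longrightarrow> \<bar>i k' s\<bar> \<le> Bi"
  shows "- rhs u v i m k s \<ge>
    - (\<beta>max * real Kmax * (Bi * qsum) + umax) * (\<Sum>(m, k)\<in>classes. max 0 (- (1 - i k s)))"
proof -
  have "max 0 (- (1 - i k s)) \<le> (\<Sum>(m, k)\<in>classes. max 0 (- (1 - i k s)))"
    using member_le_sum[OF mk, of "\<lambda>(m, k). max 0 (- (1 - i k s))"] finite_classes by auto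
  then have "\<bar>1 - i k s\<bar> \<le> (\<Sum>(m, k)\<in>classes. max 0 (- (1 - i k s)))"
    using \<open>1 - i k s \<le> 0\<close> by simp
  then have "\<bar>1 - i k s\<bar> * \<bar>rate u v i m k s\<bar>
      \<le> (\<Sum>(m, k)\<in>classes. max 0 (- (1 - i k s))) * (\<beta>max * real Kmax * (Bi * qsum) + umax)"
    using rate_abs_le[where i = i and Bi = Bi, OF mk s bound] by (intro mult_mono) (auto intro: sum_nonneg)
  moreover have "rhs u v i m k s \<le> \<bar>1 - i k s\<bar> * \<bar>rate u v i m k s\<bar>"
    unfolding rhs_eq abs_mult[symmetric] by (rule abs_ge_self)
  ultimately show ?thesis by (simp add: algebra_simps)
qed

lemma rhs_lower_bound:
  assumes mk: "(m, k) \<in> classes" and s: "s \<in> {0..T}" and "i k s \<le> 0"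
    and bound: "\<And>m' k'. (m', k') \<in> classes \<Longrightarrow> \<bar>i k' s\<bar> \<le> Bi"
  shows "rhs u v i m k s \<ge> - (\<beta>max * (1 + Bi) * real Kmax * qsum) * (\<Sum>(m, k)\<in>classes. max 0 (- i k s))"
proof -
  define N where "N = (\<Sum>(m, k)\<in>classes. max 0 (- i k s))"
  have "N \<ge> 0" unfolding N_def by (intro sum_nonneg) auto
  have infected: "0 \<le> \<beta> s * (1 - i k s) * real k"
    "\<beta> s * (1 - i k s) * real k \<le> \<beta>max * (1 + Bi) * real Kmax"
    using \<beta> s \<open>i k s \<le> 0\<close> bound[OF mk] classesD(3)[OF mk] beta_max_nonneg
    by (auto intro!: mult_mono)
  have "- (\<beta>max * (1 + Bi) * real Kmax * qsum) * N = \<beta>max * (1 + Bi) * real Kmax * (- qsum * N)"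
    by simp
  also have "\<dots> \<le> \<beta> s * (1 - i k s) * real k * (- qsum * N)"
    using infected(2) qsum_nonneg \<open>N \<ge> 0\<close> by (intro mult_right_mono_neg) auto
  also have "\<dots> \<le> \<beta> s * (1 - i k s) * real k * force v i s"
    using force_lower_bound[OF v s, of i] by (intro mult_left_mono[OF _ infected(1)]) (simp add: N_def)
  also have "\<dots> \<le> rhs u v i m k s"
    using u classesD(1)[OF mk] s \<open>i k s \<le> 0\<close> unfolding rhs_def ctrl_bounds_def by simp
  finally show ?thesis by (simp add: N_def)
qed

context
  fixes i
  assumes sol: "is_solution kt M Kmin Kmax p \<beta> \<alpha> i0 T u v i"
begin

lemma solution_le_one:
  assumes mk: "(m, k) \<in> classes" and t: "t \<in> {0..T}"
  shows "i k t \<le> 1"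
proof -
  obtain Bi where Bi: "\<And>m k s. (m, k) \<in> classes \<Longrightarrow> s \<in> {0..T} \<Longrightarrow> \<bar>i k s\<bar> \<le> Bi"
    using solution_bounded[OF sol] by blast
  then have "Bi \<ge> 0" using mk t by force
  then have C: "\<beta>max * real Kmax * (Bi * qsum) + umax \<ge> 0"
    using beta_max_nonneg qsum_nonneg umax by simp
  have "0 \<le> (\<lambda>(m, k) s. 1 - i k s) (m, k) t"
  proof (rule integral_system_nonneg[OF finite_classes C _ _ _ _ mk t])
    fix j s assume "j \<in> classes"
    then obtain m k where j: "j = (m, k)" and mk: "(m, k) \<in> classes" by (cases j) auto
    show "continuous_on {0..T} ((\<lambda>(m, k) s. 1 - i k s) j)"
      using solution_continuous[OF sol mk] by (simp add: j continuous_intros)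
    show "0 \<le> (\<lambda>(m, k) s. 1 - i k s) j 0"
      using solution_initial[OF sol mk] i0 by (simp add: j)
    show "((\<lambda>(m, k) s. - rhs u v i m k s) j has_integral
           (\<lambda>(m, k) s. 1 - i k s) j t' - (\<lambda>(m, k) s. 1 - i k s) j s) {s..t'}"
      if "0 \<le> s" "s \<le> t'" "t' \<le> T" for t'
      using has_integral_neg[OF solution_has_integral[OF sol mk that]] by (simp add: j)
    show "- (\<beta>max * real Kmax * (Bi * qsum) + umax) * (\<Sum>j\<in>classes. max 0 (- (\<lambda>(m, k) s. 1 - i k s) j s))
          \<le> (\<lambda>(m, k) s. - rhs u v i m k s) j s"
      if "s \<in> {0..T}" "(\<lambda>(m, k) s. 1 - i k s) j s \<le> 0"
    proof -
      have "1 - i k s \<le> 0" using that(2) by (simp add: j)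
      from neg_rhs_lower_bound[where i = i and Bi = Bi, OF mk that(1) this Bi[OF _ that(1)]]
      show ?thesis by (simp add: j case_prod_unfold)
    qed
  qed
  then show ?thesis by simp
qed

lemma solution_nonneg:
  assumes mk: "(m, k) \<in> classes" and t: "t \<in> {0..T}"
  shows "0 \<le> i k t"
proof -
  obtain Bi where Bi: "\<And>m k s. (m, k) \<in> classes \<Longrightarrow> s \<in> {0..T} \<Longrightarrow> \<bar>i k s\<bar> \<le> Bi"
    using solution_bounded[OF sol] by blast
  then have "Bi \<ge> 0" using mk t by force
  then have C: "\<beta>max * (1 + Bi) * real Kmax * qsum \<ge> 0"
    using beta_max_nonneg qsum_nonneg by simp
  have "0 \<le> (\<lambda>(m, k). i k) (m, k) t"
  proof (rule integral_system_nonneg[OF finite_classes C _ _ _ _ mk t])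
    fix j s assume "j \<in> classes"
    then obtain m k where j: "j = (m, k)" and mk: "(m, k) \<in> classes" by (cases j) auto
    show "continuous_on {0..T} ((\<lambda>(m, k). i k) j)"
      using solution_continuous[OF sol mk] by (simp add: j)
    show "0 \<le> (\<lambda>(m, k). i k) j 0"
      using solution_initial[OF sol mk] i0 by (simp add: j)
    show "((\<lambda>(m, k). rhs u v i m k) j has_integral (\<lambda>(m, k). i k) j t' - (\<lambda>(m, k). i k) j s) {s..t'}"
      if "0 \<le> s" "s \<le> t'" "t' \<le> T" for t'
      using solution_has_integral[OF sol mk that] by (simp add: j)
    show "- (\<beta>max * (1 + Bi) * real Kmax * qsum) * (\<Sum>j\<in>classes. max 0 (- (\<lambda>(m, k). i k) j s))
          \<le> (\<lambda>(m, k). rhs u v i m k) j s"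
      if "s \<in> {0..T}" "(\<lambda>(m, k). i k) j s \<le> 0"
    proof -
      have "i k s \<le> 0" using that(2) by (simp add: j)
      from rhs_lower_bound[where i = i and Bi = Bi, OF mk that(1) this Bi[OF _ that(1)]]
      show ?thesis by (simp add: j case_prod_unfold)
    qed
  qed
  then show ?thesis by simp
qed

lemma solution_in_unit_interval:
  assumes "k \<in> {Kmin..Kmax}" "t \<in> {0..T}"
  shows "i k t \<in> {0..1}"
proof -
  obtain m where "(m, k) \<in> classes"
    using degree_in_classes[OF assms(1)] .
  then show ?thesis
    using solution_nonneg solution_le_one assms(2) by auto
qed

lemma rhs_abs_le:
  assumes mk: "(m, k) \<in> classes" and s: "s \<in> {0..T}"
  shows "\<bar>rhs u v i m k s\<bar> \<le> lipschitz_const"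
proof -
  have i01: "i k' s \<in> {0..1}" if "(m', k') \<in> classes" for m' k'
    using solution_in_unit_interval[OF classesD(3)[OF that] s] .
  then have "\<bar>rate u v i m k s\<bar> \<le> lipschitz_const"
    using rate_abs_le[OF mk s, of i 1] unfolding lipschitz_const_def by fastforce
  moreover have "\<bar>1 - i k s\<bar> \<le> 1"
    using i01[OF mk] by simp
  ultimately have "\<bar>1 - i k s\<bar> * \<bar>rate u v i m k s\<bar> \<le> 1 * lipschitz_const"
    by (intro mult_mono) auto
  then show ?thesis
    unfolding rhs_eq by (simp add: abs_mult)
qed

lemma solution_lipschitz:
  assumes k: "k \<in> {Kmin..Kmax}" and "s \<in> {0..T}" "t \<in> {0..T}"
  shows "\<bar>i k t - i k s\<bar> \<le> lipschitz_const * \<bar>t - s\<bar>"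
proof -
  obtain m where mk: "(m, k) \<in> classes"
    using degree_in_classes[OF k] .
  have ordered: "\<bar>i k t - i k s\<bar> \<le> lipschitz_const * (t - s)"
    if "0 \<le> s" "s \<le> t" "t \<le> T" for s t
  proof -
    have "norm (i k t - i k s) \<le> lipschitz_const * measure lborel {s..t}"
      using has_integral_bound[of lipschitz_const "rhs u v i m k" _ s t] lipschitz_const_nonneg
        solution_has_integral[OF sol mk that] rhs_abs_le[OF mk] that
      by simp
    then show ?thesis using that by simp
  qed
  show ?thesis
    using ordered[of s t] ordered[of t s] assms by (cases "s \<le> t") (auto simp: abs_minus_commute)
qed

end

end

lemma rhs_bounded_uniform_limit:
  assumes u: "\<And>m. m \<in> {1..M} \<Longrightarrow> bounded_uniform_limit {0..T} (\<lambda>n. u n m) (u' m) F"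
    and v: "\<And>m. m \<in> {1..M} \<Longrightarrow> bounded_uniform_limit {0..T} (\<lambda>n. v n m) (v' m) F"
    and i: "\<And>k. k \<in> {Kmin..Kmax} \<Longrightarrow> bounded_uniform_limit {0..T} (\<lambda>n. i n k) (i' k) F"
    and mk: "(m, k) \<in> classes"
  shows "bounded_uniform_limit {0..T} (\<lambda>n s. rhs (u n) (v n) (i n) m k s) (\<lambda>s. rhs u' v' i' m k s) F"
  unfolding rhs_def force_def
  using classesD[OF mk]
  by (intro bounded_uniform_limit_add bounded_uniform_limit_mult bounded_uniform_limit_diff
      bounded_uniform_limit_sum bounded_uniform_limit_const bounded_uniform_limit_const_fun[OF beta_bounded]
      u v i) (auto dest: grp_mem_range)

lemma is_solution_limit:
  assumes sol: "\<And>n. is_solution kt M Kmin Kmax p \<beta> \<alpha> i0 T (u n) (v n) (i n)"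
    and u: "\<And>m. m \<in> {1..M} \<Longrightarrow> bounded_uniform_limit {0..T} (\<lambda>n. u n m) (u' m) sequentially"
    and v: "\<And>m. m \<in> {1..M} \<Longrightarrow> bounded_uniform_limit {0..T} (\<lambda>n. v n m) (v' m) sequentially"
    and i: "\<And>k. k \<in> {Kmin..Kmax} \<Longrightarrow> bounded_uniform_limit {0..T} (\<lambda>n. i n k) (i' k) sequentially"
  shows "is_solution kt M Kmin Kmax p \<beta> \<alpha> i0 T u' v' i'"
  unfolding is_solution_iff
proof (intro ballI)
  fix m k t assume m: "m \<in> {1..M}" and k: "k \<in> grp kt m" and t: "t \<in> {0..T}"
  then have mk: "(m, k) \<in> classes" by (simp add: classes_def)
  show "(rhs u' v' i' m k has_integral (i' k t - i0)) {0..t}"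
  proof (rule has_integral_uniform_limit[where f = "\<lambda>n. rhs (u n) (v n) (i n) m k" and I = "\<lambda>n. i n k t - i0"])
    show "(rhs (u n) (v n) (i n) m k has_integral (i n k t - i0)) {0..t}" for n
      using sol[of n] m k t unfolding is_solution_iff by blast
    have "uniform_limit {0..T} (\<lambda>n. rhs (u n) (v n) (i n) m k) (rhs u' v' i' m k) sequentially"
      using rhs_bounded_uniform_limit[OF u v i mk] unfolding bounded_uniform_limit_def by simp
    then show "uniform_limit {0..t} (\<lambda>n. rhs (u n) (v n) (i n) m k) (rhs u' v' i' m k) sequentially"
      by (rule uniform_limit_on_subset) (use t in auto)
    have "uniform_limit {0..T} (\<lambda>n. i n k) (i' k) sequentially"
      using i[OF classesD(3)[OF mk]] unfolding bounded_uniform_limit_def by simp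
    then show "(\<lambda>n. i n k t - i0) \<longlonglongrightarrow> i' k t - i0"
      using t by (intro tendsto_diff tendsto_const tendsto_uniform_limitI)
  qed
qed

lemma ctrl_bounded_uniform_limit:
  assumes bounds: "\<And>n. ctrl_bounds bd (u n)" and m: "m \<in> {1..M}"
    and lim: "uniform_limit {0..T} (\<lambda>n. u n m) (u' m) sequentially"
  shows "bounded_uniform_limit {0..T} (\<lambda>n. u n m) (u' m) sequentially"
  by (rule bounded_uniform_limitI[OF lim sequentially_bot, of bd])
    (use bounds m in \<open>auto simp: ctrl_bounds_def\<close>)

lemma cost_integral_limit:
  assumes bc: "\<forall>m\<in>{1..M}. continuous_on {0..} (b m) \<and> continuous_on {0..} (c m)"
    and cost: "\<And>n. (cost_integrand kt M Kmin Kmax p \<beta> \<alpha> b c (u n) (v n) (i n) has_integral B) {0..T}"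
    and bu: "\<And>n. ctrl_bounds umax (u n)" and bv: "\<And>n. ctrl_bounds vmax (v n)"
    and u: "\<And>m. m \<in> {1..M} \<Longrightarrow> uniform_limit {0..T} (\<lambda>n. u n m) (u' m) sequentially"
    and v: "\<And>m. m \<in> {1..M} \<Longrightarrow> uniform_limit {0..T} (\<lambda>n. v n m) (v' m) sequentially"
    and i: "\<And>k. k \<in> {Kmin..Kmax} \<Longrightarrow> bounded_uniform_limit {0..T} (\<lambda>n. i n k) (i' k) sequentially"
  shows "(cost_integrand kt M Kmin Kmax p \<beta> \<alpha> b c u' v' i' has_integral B) {0..T}"
proof (rule has_integral_uniform_limit[where f = "\<lambda>n. cost_integrand kt M Kmin Kmax p \<beta> \<alpha> b c (u n) (v n) (i n)"
      and I = "\<lambda>n. B"])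
  have b: "bounded_uniform_limit {0..T} (\<lambda>n s. b m (u n m s)) (\<lambda>s. b m (u' m s)) sequentially"
    if "m \<in> {1..M}" for m
  proof (rule bounded_uniform_limit_compose[OF u[OF that] sequentially_bot])
    show "continuous_on {0..umax} (b m)"
      using bc that by (auto intro: continuous_on_subset[of "{0..}"])
  qed (use bu that in \<open>auto simp: ctrl_bounds_def\<close>)
  have c: "bounded_uniform_limit {0..T} (\<lambda>n s. c m (v n m s)) (\<lambda>s. c m (v' m s)) sequentially"
    if "m \<in> {1..M}" for m
  proof (rule bounded_uniform_limit_compose[OF v[OF that] sequentially_bot])
    show "continuous_on {0..vmax} (c m)"
      using bc that by (auto intro: continuous_on_subset[of "{0..}"])
  qed (use bv that in \<open>auto simp: ctrl_bounds_def\<close>)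
  have "bounded_uniform_limit {0..T}
      (\<lambda>n s. cost_integrand kt M Kmin Kmax p \<beta> \<alpha> b c (u n) (v n) (i n) s)
      (\<lambda>s. cost_integrand kt M Kmin Kmax p \<beta> \<alpha> b c u' v' i' s) sequentially"
    unfolding cost_integrand_def
    by (intro bounded_uniform_limit_add bounded_uniform_limit_mult bounded_uniform_limit_diff
        bounded_uniform_limit_sum bounded_uniform_limit_const bounded_uniform_limit_const_fun[OF beta_bounded]
        ctrl_bounded_uniform_limit[OF bv _ v] b c i) (auto dest: grp_mem_range)
  then show "uniform_limit {0..T} (\<lambda>n. cost_integrand kt M Kmin Kmax p \<beta> \<alpha> b c (u n) (v n) (i n))
      (cost_integrand kt M Kmin Kmax p \<beta> \<alpha> b c u' v' i') sequentially"
    unfolding bounded_uniform_limit_def by simp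
qed (use cost in simp_all)

lemma convergent_subsequence:
  fixes u v i :: "nat \<Rightarrow> nat \<Rightarrow> real \<Rightarrow> real"
  assumes CP: "(CP \<longlongrightarrow> 0) (at_right 0)"
    and u: "\<And>n. u n \<in> Ctrl T CP M umax" and v: "\<And>n. v n \<in> Ctrl T CP M vmax"
    and sol: "\<And>n. is_solution kt M Kmin Kmax p \<beta> \<alpha> i0 T (u n) (v n) (i n)"
  obtains r u' v' i' where "strict_mono r"
    "\<And>m. m \<in> {1..M} \<Longrightarrow> uniform_limit {0..T} (\<lambda>n. u (r n) m) (u' m) sequentially"
    "\<And>m. m \<in> {1..M} \<Longrightarrow> uniform_limit {0..T} (\<lambda>n. v (r n) m) (v' m) sequentially"
    "\<And>k. k \<in> {Kmin..Kmax} \<Longrightarrow> uniform_limit {0..T} (\<lambda>n. i (r n) k) (i' k) sequentially"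
proof -
  \<comment> \<open>A common modulus of continuity for the controls and the Lipschitz states.\<close>
  define \<omega> where "\<omega> \<epsilon> = max (CP \<epsilon>) (lipschitz_const * \<epsilon>)" for \<epsilon> :: real
  have "((\<lambda>\<epsilon>. lipschitz_const * \<epsilon>) \<longlongrightarrow> 0) (at_right 0)"
    by (intro tendsto_eq_intros) auto
  from tendsto_max[OF CP this] have \<omega>: "(\<omega> \<longlongrightarrow> 0) (at_right 0)"
    unfolding \<omega>_def[abs_def] by simp
  define K where "K = {\<sigma> \<in> Psi T \<omega>. \<forall>t\<in>{0..T}. \<bar>\<sigma> t\<bar> \<le> umax + vmax + 1}"
  have CP_\<omega>: "Psi T CP \<subseteq> Psi T \<omega>" and lipschitz_\<omega>: "Psi T (\<lambda>\<epsilon>. lipschitz_const * \<epsilon>) \<subseteq> Psi T \<omega>"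
    by (rule Psi_mono, simp add: \<omega>_def)+
  have Ctrl_K: "\<sigma> m \<in> K" if "\<sigma> \<in> Ctrl T CP M bd" "m \<in> {1..M}" "bd \<le> umax + vmax + 1" for \<sigma> bd m
  proof -
    have "\<bar>\<sigma> m t\<bar> \<le> umax + vmax + 1" if "t \<in> {0..T}" for t
    proof -
      have "0 \<le> \<sigma> m t" "\<sigma> m t \<le> bd"
        using \<open>\<sigma> \<in> Ctrl T CP M bd\<close> \<open>m \<in> {1..M}\<close> that unfolding Ctrl_def by auto
      with \<open>bd \<le> umax + vmax + 1\<close> show ?thesis by simp
    qed
    moreover have "\<sigma> m \<in> Psi T CP"
      using \<open>\<sigma> \<in> Ctrl T CP M bd\<close> \<open>m \<in> {1..M}\<close> unfolding Ctrl_def by blast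
    ultimately show ?thesis using CP_\<omega> unfolding K_def by auto
  qed
  have u_K: "u n m \<in> K" and v_K: "v n m \<in> K" if "m \<in> {1..M}" for n m
    using Ctrl_K[OF u that] Ctrl_K[OF v that] umax vmax by simp_all
  have bounds: "ctrl_bounds umax (u n)" "ctrl_bounds vmax (v n)" for n
    using Ctrl_ctrl_bounds[OF u] Ctrl_ctrl_bounds[OF v] .
  have i_K: "i n k \<in> K" if "k \<in> {Kmin..Kmax}" for n k
  proof -
    have "i n k \<in> Psi T (\<lambda>\<epsilon>. lipschitz_const * \<epsilon>)"
      by (rule lipschitz_in_Psi[OF lipschitz_const_nonneg solution_lipschitz[OF bounds[of n] sol[of n] that]])
    moreover have "\<bar>i n k t\<bar> \<le> umax + vmax + 1" if "t \<in> {0..T}" for t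
      using solution_in_unit_interval[OF bounds[of n] sol[of n] \<open>k \<in> {Kmin..Kmax}\<close> that] umax vmax by simp
    ultimately show ?thesis using lipschitz_\<omega> unfolding K_def by auto
  qed
  \<comment> \<open>Tagging the three families lets one application of Arzela-Ascoli serve all of them.\<close>
  define J :: "(nat \<times> nat) set" where "J = {0, 1} \<times> {1..M} \<union> {2} \<times> {Kmin..Kmax}"
  define F :: "nat \<times> nat \<Rightarrow> nat \<Rightarrow> real \<Rightarrow> real" where
    "F = (\<lambda>(c, j) n. if c = 0 then u n j else if c = 1 then v n j else i n j)"
  have "F j n \<in> K" if "j \<in> J" for j n
    using that u_K v_K i_K unfolding J_def F_def by auto
  then have "\<exists>r g. strict_mono r \<and> (\<forall>j\<in>J. uniform_limit {0..T} (\<lambda>n. F j (r n)) (g j) sequentially)"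
    by (intro Psi_Arzela_Ascoli[where Bd = "umax + vmax + 1", OF _ \<omega>]) (auto simp: K_def J_def)
  then obtain r g where "strict_mono r"
    and lim: "\<forall>j\<in>J. uniform_limit {0..T} (\<lambda>n. F j (r n)) (g j) sequentially"
    by blast
  show thesis
  proof (rule that[of r "\<lambda>m. g (0, m)" "\<lambda>m. g (1, m)" "\<lambda>k. g (2, k)"])
    show "uniform_limit {0..T} (\<lambda>n. u (r n) m) (g (0, m)) sequentially" if "m \<in> {1..M}" for m
      using lim[rule_format, of "(0, m)"] that by (simp add: J_def F_def)
    show "uniform_limit {0..T} (\<lambda>n. v (r n) m) (g (1, m)) sequentially" if "m \<in> {1..M}" for m
      using lim[rule_format, of "(1, m)"] that by (simp add: J_def F_def)
    show "uniform_limit {0..T} (\<lambda>n. i (r n) k) (g (2, k)) sequentially" if "k \<in> {Kmin..Kmax}" for k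
      using lim[rule_format, of "(2, k)"] that by (simp add: J_def F_def)
  qed fact
qed

lemma Wset_limit:
  fixes u v i :: "nat \<Rightarrow> nat \<Rightarrow> real \<Rightarrow> real"
  assumes bc: "\<forall>m\<in>{1..M}. continuous_on {0..} (b m) \<and> continuous_on {0..} (c m)"
    and u: "\<And>n. u n \<in> Ctrl T CP M umax" and v: "\<And>n. v n \<in> Ctrl T CP M vmax"
    and sol: "\<And>n. is_solution kt M Kmin Kmax p \<beta> \<alpha> i0 T (u n) (v n) (i n)"
    and cost: "\<And>n. (cost_integrand kt M Kmin Kmax p \<beta> \<alpha> b c (u n) (v n) (i n) has_integral B) {0..T}"
    and lim_u: "\<And>m. m \<in> {1..M} \<Longrightarrow> uniform_limit {0..T} (\<lambda>n. u n m) (u' m) sequentially"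
    and lim_v: "\<And>m. m \<in> {1..M} \<Longrightarrow> uniform_limit {0..T} (\<lambda>n. v n m) (v' m) sequentially"
    and lim_i: "\<And>k. k \<in> {Kmin..Kmax} \<Longrightarrow> uniform_limit {0..T} (\<lambda>n. i n k) (i' k) sequentially"
  shows "(u', v') \<in> Wset kt M Kmin Kmax p \<beta> \<alpha> i0 T B CP umax vmax b c"
proof -
  have bounds: "ctrl_bounds umax (u n)" "ctrl_bounds vmax (v n)" for n
    using Ctrl_ctrl_bounds[OF u] Ctrl_ctrl_bounds[OF v] .
  have lim_u': "bounded_uniform_limit {0..T} (\<lambda>n. u n m) (u' m) sequentially" if "m \<in> {1..M}" for m
    using bounds(1) that lim_u[OF that] by (rule ctrl_bounded_uniform_limit)
  have lim_v': "bounded_uniform_limit {0..T} (\<lambda>n. v n m) (v' m) sequentially" if "m \<in> {1..M}" for m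
    using bounds(2) that lim_v[OF that] by (rule ctrl_bounded_uniform_limit)
  have lim_i': "bounded_uniform_limit {0..T} (\<lambda>n. i n k) (i' k) sequentially"
    if "k \<in> {Kmin..Kmax}" for k
  proof (rule bounded_uniform_limitI[OF lim_i[OF that] sequentially_bot])
    show "\<bar>i n k t\<bar> \<le> 1" if "t \<in> {0..T}" for n t
      using solution_in_unit_interval[OF bounds sol \<open>k \<in> {Kmin..Kmax}\<close> that] by simp
  qed
  have "u' \<in> Ctrl T CP M umax"
    by (rule Ctrl_closed[OF u tendsto_uniform_limitI[OF lim_u]])
  moreover have "v' \<in> Ctrl T CP M vmax"
    by (rule Ctrl_closed[OF v tendsto_uniform_limitI[OF lim_v]])
  moreover have "is_solution kt M Kmin Kmax p \<beta> \<alpha> i0 T u' v' i'"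
    by (rule is_solution_limit[OF sol lim_u' lim_v' lim_i'])
  moreover have "(cost_integrand kt M Kmin Kmax p \<beta> \<alpha> b c u' v' i' has_integral B) {0..T}"
    by (rule cost_integral_limit[OF bc cost bounds lim_u lim_v lim_i'])
  ultimately show ?thesis
    unfolding Wset_def by blast
qed

theorem Wset_sequentially_compact:
  fixes w :: "nat \<Rightarrow> (nat \<Rightarrow> real \<Rightarrow> real) \<times> (nat \<Rightarrow> real \<Rightarrow> real)"
  assumes bc: "\<forall>m\<in>{1..M}. continuous_on {0..} (b m) \<and> continuous_on {0..} (c m)"
    and CP: "(CP \<longlongrightarrow> 0) (at_right 0)"
    and w: "\<forall>n. w n \<in> Wset kt M Kmin Kmax p \<beta> \<alpha> i0 T B CP umax vmax b c"
  shows "\<exists>r w0. strict_mono r \<and> w0 \<in> Wset kt M Kmin Kmax p \<beta> \<alpha> i0 T B CP umax vmax b c \<and>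
           (\<forall>m\<in>{1..M}.
              uniform_limit {0..T} (\<lambda>n. fst (w (r n)) m) (fst w0 m) sequentially \<and>
              uniform_limit {0..T} (\<lambda>n. snd (w (r n)) m) (snd w0 m) sequentially)"
proof -
  define u where "u n = fst (w n)" for n
  define v where "v n = snd (w n)" for n
  have "\<forall>n. \<exists>i. u n \<in> Ctrl T CP M umax \<and> v n \<in> Ctrl T CP M vmax \<and>
      is_solution kt M Kmin Kmax p \<beta> \<alpha> i0 T (u n) (v n) i \<and>
      (cost_integrand kt M Kmin Kmax p \<beta> \<alpha> b c (u n) (v n) i has_integral B) {0..T}"
    using w unfolding u_def v_def Wset_def by (simp add: case_prod_beta)
  from choice[OF this] obtain i where "\<forall>n. u n \<in> Ctrl T CP M umax \<and> v n \<in> Ctrl T CP M vmax \<and>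
      is_solution kt M Kmin Kmax p \<beta> \<alpha> i0 T (u n) (v n) (i n) \<and>
      (cost_integrand kt M Kmin Kmax p \<beta> \<alpha> b c (u n) (v n) (i n) has_integral B) {0..T}"
    by blast
  then have u: "\<And>n. u n \<in> Ctrl T CP M umax" and v: "\<And>n. v n \<in> Ctrl T CP M vmax"
    and sol: "\<And>n. is_solution kt M Kmin Kmax p \<beta> \<alpha> i0 T (u n) (v n) (i n)"
    and cost: "\<And>n. (cost_integrand kt M Kmin Kmax p \<beta> \<alpha> b c (u n) (v n) (i n) has_integral B) {0..T}"
    by blast+
  obtain r u' v' i' where "strict_mono r"
    and lim_u: "\<And>m. m \<in> {1..M} \<Longrightarrow> uniform_limit {0..T} (\<lambda>n. u (r n) m) (u' m) sequentially"
    and lim_v: "\<And>m. m \<in> {1..M} \<Longrightarrow> uniform_limit {0..T} (\<lambda>n. v (r n) m) (v' m) sequentially"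
    and lim_i: "\<And>k. k \<in> {Kmin..Kmax} \<Longrightarrow> uniform_limit {0..T} (\<lambda>n. i (r n) k) (i' k) sequentially"
    using convergent_subsequence[where u = u and v = v and i = i, OF CP u v sol] by blast
  have "(u', v') \<in> Wset kt M Kmin Kmax p \<beta> \<alpha> i0 T B CP umax vmax b c"
    by (rule Wset_limit[where u = "\<lambda>n. u (r n)" and v = "\<lambda>n. v (r n)" and i = "\<lambda>n. i (r n)",
          OF bc u v sol cost lim_u lim_v lim_i])
  then show ?thesis
    using \<open>strict_mono r\<close> lim_u lim_v unfolding u_def v_def
    by (intro exI[of _ r] exI[of _ "(u', v')"]) simp
qed

end

theorem lemma3:
  fixes kt :: "nat \<Rightarrow> nat" and M Kmin Kmax :: nat and p :: "nat \<Rightarrow> real"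
    and T i0 B \<alpha> umax vmax \<beta>max :: real and \<beta> :: "real \<Rightarrow> real"
    and b c :: "nat \<Rightarrow> real \<Rightarrow> real" and CP :: "real \<Rightarrow> real"
  assumes M: "M \<ge> 1"
    and Kmin: "Kmin \<ge> 1"
    and kt0: "kt 0 = Kmin - 1" and ktM: "kt M = Kmax"
    and kt_mono: "strict_mono_on {0..M} kt"
    and p_nonneg: "\<forall>k\<in>{Kmin..Kmax}. p k \<ge> 0"
    and p_sum: "(\<Sum>k\<in>{Kmin..Kmax}. p k) = 1"
    and T: "T > 0" and i0: "0 \<le> i0" "i0 \<le> 1" and B: "B > 0"
    and \<alpha>: "0 < \<alpha>" "\<alpha> \<le> 1" and umax: "umax > 0" and vmax: "vmax \<ge> 0"
    and \<alpha>v: "\<alpha> * (1 + vmax) \<le> 1"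
    and \<beta>: "\<forall>t\<in>{0..T}. 0 \<le> \<beta> t \<and> \<beta> t \<le> \<beta>max"
    and bc: "\<forall>m\<in>{1..M}. continuous_on {0..} (b m) \<and> continuous_on {0..} (c m)
                \<and> mono_on {0..} (b m) \<and> mono_on {0..} (c m)
                \<and> (\<forall>x\<ge>0. b m x \<ge> 0 \<and> c m x \<ge> 0)"
    and CP: "\<forall>\<epsilon>>0. CP \<epsilon> \<ge> 0" "(CP \<longlongrightarrow> 0) (at_right 0)"
  shows "\<forall>w :: nat \<Rightarrow> (nat \<Rightarrow> real \<Rightarrow> real) \<times> (nat \<Rightarrow> real \<Rightarrow> real).
           (\<forall>n. w n \<in> Wset kt M Kmin Kmax p \<beta> \<alpha> i0 T B CP umax vmax b c) \<longrightarrow>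
           (\<exists>r w0. strict_mono r \<and> w0 \<in> Wset kt M Kmin Kmax p \<beta> \<alpha> i0 T B CP umax vmax b c \<and>
              (\<forall>m\<in>{1..M}.
                 uniform_limit {0..T} (\<lambda>n. fst (w (r n)) m) (fst w0 m) sequentially \<and>
                 uniform_limit {0..T} (\<lambda>n. snd (w (r n)) m) (snd w0 m) sequentially))"
proof -
  interpret network_epidemic kt M Kmin Kmax p \<beta> \<alpha> i0 T umax vmax \<beta>max
    using Kmin kt0 ktM kt_mono p_nonneg p_sum T i0 \<alpha>(1) umax vmax \<alpha>v \<beta>
    by unfold_locales
  show ?thesis
    using bc CP(2) by (intro allI impI Wset_sequentially_compact) auto
qed

end
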